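(* For all positive integers $n$ and $k$, \[ 0\le\frac1{n^k}-\frac1{n(n+1)\cdots(n+k-1)}<\frac{k^2}{2n^{k+1}}. \] *)

theory Defs
  imports Complex_Main
begin

end

theory Submission
  imports Defs "HOL-Analysis.Infinite_Products"
begin

text \<open>Writing \<open>n / (n + i) = 1 - i / (n + i)\<close>, the Weierstrass product inequality bounds
  the product of the \<open>n / (n + i)\<close>, \<open>i < k\<close>, from below by \<open>1 - \<Sum>i<k. i / n = 1 - k (k - 1) / (2 n)\<close>.
  The difference in question is \<open>1 / n^k\<close> times one minus that product, hence lies between
  \<open>0\<close> and \<open>k (k - 1) / (2 n^(k+1))\<close>.\<close>

lemma double_sum_lessThan_of_nat: "2 * (\<Sum>i<k. real i) = real k * (real k - 1)"
  by (induction k) (simp_all add: algebra_simps)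

lemma prod_div_add_of_nat_ge:
  fixes x :: real
  assumes "x > 0"
  shows "1 - real k * (real k - 1) / (2 * x) \<le> (\<Prod>i<k. x / (x + real i))"
proof -
  have "1 - real k * (real k - 1) / (2 * x) = 1 - (\<Sum>i<k. real i / x)"
    by (simp add: sum_divide_distrib flip: double_sum_lessThan_of_nat)
  also have "\<dots> \<le> 1 - (\<Sum>i<k. real i / (x + real i))"
    using assms by (intro diff_left_mono sum_mono frac_le) auto
  also have "\<dots> \<le> (\<Prod>i<k. 1 - real i / (x + real i))"
    using assms by (intro Weierstrass_prod_ineq) auto
  also have "\<dots> = (\<Prod>i<k. x / (x + real i))"
    using assms by (intro prod.cong) (auto simp: field_simps)
  finally show ?thesis .
qed

lemma inverse_power_minus_inverse_pochhammer_bounds: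
  fixes x :: real
  assumes "x > 0" and "k \<ge> 1"
  shows "0 \<le> 1 / x ^ k - 1 / pochhammer x k
    \<and> 1 / x ^ k - 1 / pochhammer x k < real k ^ 2 / (2 * x ^ (k + 1))"
proof -
  define Q where "Q = x ^ k / pochhammer x k"
  have poch_pos: "pochhammer x k > 0"
    using assms by (simp add: pochhammer_pos)
  have power_pos: "x ^ k > 0"
    using assms by simp
  have "Q = (\<Prod>i<k. x / (x + real i))"
    by (simp add: Q_def pochhammer_prod prod_dividef lessThan_atLeast0)
  then have Q_ge: "1 - real k * (real k - 1) / (2 * x) \<le> Q"
    using prod_div_add_of_nat_ge[OF assms(1)] by simp
  have "x ^ k = (\<Prod>i = 0..<k. x)"
    by simp
  also have "\<dots> \<le> pochhammer x k"
    using assms unfolding pochhammer_prod by (intro prod_mono) auto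
  finally have "x ^ k \<le> pochhammer x k" .
  then have Q_le: "Q \<le> 1"
    using poch_pos by (simp add: Q_def)
  have diff_eq: "1 / x ^ k - 1 / pochhammer x k = (1 - Q) / x ^ k"
    using poch_pos assms(1) by (simp add: Q_def diff_divide_distrib)
  have "(1 - Q) / x ^ k \<le> real k * (real k - 1) / (2 * x) / x ^ k"
    using Q_ge power_pos by (intro divide_right_mono) auto
  also have "\<dots> = real k * (real k - 1) / (2 * x ^ (k + 1))"
    by simp
  also have "\<dots> < real k ^ 2 / (2 * x ^ (k + 1))"
    using assms by (intro divide_strict_right_mono) (auto simp: power2_eq_square)
  finally show ?thesis
    using Q_le power_pos unfolding diff_eq by simp
qed

theorem lemma3p8:
  fixes n k :: nat
  assumes "n \<ge> 1" and "k \<ge> 1"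
  shows "0 \<le> 1 / real n ^ k - 1 / (\<Prod>i<k. real (n + i))
    \<and> 1 / real n ^ k - 1 / (\<Prod>i<k. real (n + i)) < real k ^ 2 / (2 * real n ^ (k + 1))"
proof -
  have "(\<Prod>i<k. real (n + i)) = pochhammer (real n) k"
    by (simp add: pochhammer_prod lessThan_atLeast0)
  moreover have "real n > 0"
    using assms(1) by simp
  ultimately show ?thesis
    using inverse_power_minus_inverse_pochhammer_bounds assms(2) by simp
qed

end
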